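(* Let $A$ be an $n\times n$ affinity matrix of a graph with vertex set $V$, let $\mathcal{Q}\subseteq V$ be a constraint set, let $\alpha>0$, and let $I_{\mathcal{Q}}$ be the $n\times n$ diagonal matrix whose diagonal entries equal 1 for vertices in $V\setminus\mathcal{Q}$ and 0 otherwise. Consider the parametrized quadratic program: maximize $f_{\mathcal{Q}}^\alpha(\mathbf{x})=\mathbf{x}^\top(A-\alpha I_{\mathcal{Q}})\mathbf{x}$ subject to $\mathbf{x}\in\Delta=\{\mathbf{x}\in\mathbb{R}^n:\sum_i x_i=1,\ x_i\ge 0\}$. Given a distribution $\mathbf{x}\in\Delta$ with support $\sigma(\mathbf{x})=\{i\in V: x_i>0\}$, if $(A\mathbf{x})_i > \mathbf{x}^\top A\mathbf{x} - \alpha\, \mathbf{x}_{\mathcal{Q}}^\top \mathbf{x}_{\mathcal{Q}}$ for some $i\notin\sigma(\mathbf{x})$, then (1) $\mathbf{x}$ is not the maximizer of this parametrized quadratic program, and (2) the $i$-th unit vector $e_i$ is a dominant distribution for $\mathbf{x}$, where a distribution $\mathbf{y}\in\Delta$ is called a dominant distribution for $\mathbf{x}$ if $\mathbf{y}^\top(A-\alpha I_{\mathcal{Q}})\mathbf{x} > \mathbf{x}^\top(A-\alpha I_{\mathcal{Q}})\mathbf{x}$.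
   Context: Constrained dominant set clustering: local maximizers of the program above (with $\alpha$ larger than the largest eigenvalue of the principal submatrix of $A$ indexed by $V\setminus\mathcal{Q}$) have support intersecting $\mathcal{Q}$. The KKT conditions of the program state that $[(A-\alpha I_{\mathcal{Q}})\mathbf{x}]_i=\lambda/2$ for $i\in\sigma(\mathbf{x})$ and $\le\lambda/2$ for $i\notin\sigma(\mathbf{x})$. The term $\mathbf{x}_{\mathcal{Q}}^\top \mathbf{x}_{\mathcal{Q}}$ is the paper's notation for the quadratic penalty term $\mathbf{x}^\top I_{\mathcal{Q}}\mathbf{x}$. *)

theory Defs
  imports "HOL-Analysis.Analysis"
begin

text \<open>Vertex set V is the finite index type 'n; vectors in R^n are real^'n,
  n x n matrices are real^'n^'n.\<close>

definition affinity_matrix :: "real^'n^'n \<Rightarrow> bool" where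
  "affinity_matrix A \<longleftrightarrow> transpose A = A \<and> (\<forall>i j. 0 \<le> A$i$j) \<and> (\<forall>i. A$i$i = 0)"

definition std_simplex :: "(real^'n) set" where
  "std_simplex = {x. (\<Sum>i\<in>UNIV. x$i) = 1 \<and> (\<forall>i. 0 \<le> x$i)}"

definition support :: "real^'n \<Rightarrow> 'n set" where
  "support x = {i. 0 < x$i}"

definition IQ :: "'n set \<Rightarrow> real^'n^'n" where
  "IQ Q = (\<chi> i j. if i = j \<and> i \<notin> Q then 1 else 0)"

definition fQ :: "real^'n^'n \<Rightarrow> real \<Rightarrow> 'n set \<Rightarrow> real^'n \<Rightarrow> real" where
  "fQ A \<alpha> Q x = x \<bullet> ((A - \<alpha> *\<^sub>R IQ Q) *v x)"

definition is_maximizer :: "real^'n^'n \<Rightarrow> real \<Rightarrow> 'n set \<Rightarrow> real^'n \<Rightarrow> bool" where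
  "is_maximizer A \<alpha> Q x \<longleftrightarrow> x \<in> std_simplex \<and> (\<forall>y\<in>std_simplex. fQ A \<alpha> Q y \<le> fQ A \<alpha> Q x)"

definition dominant_distribution :: "real^'n^'n \<Rightarrow> real \<Rightarrow> 'n set \<Rightarrow> real^'n \<Rightarrow> real^'n \<Rightarrow> bool" where
  "dominant_distribution A \<alpha> Q y x \<longleftrightarrow>
     y \<in> std_simplex \<and> y \<bullet> ((A - \<alpha> *\<^sub>R IQ Q) *v x) > x \<bullet> ((A - \<alpha> *\<^sub>R IQ Q) *v x)"

end

theory Submission
  imports Defs
begin

text \<open>Let \<open>M = A - \<alpha> I\<^sub>Q\<close>. Since \<open>x\<^sub>i = 0\<close>, the \<open>i\<close>-th row of \<open>I\<^sub>Q\<close> does not see \<open>x\<close>,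
  so \<open>e\<^sub>i\<^sup>T M x = (A x)\<^sub>i\<close> and the hypothesis says exactly that \<open>e\<^sub>i\<close> is a dominant
  distribution for \<open>x\<close>. For symmetric \<open>M\<close> the derivative of \<open>t \<mapsto> f(x + t(y - x))\<close>
  at \<open>0\<close> is \<open>2 (y - x)\<^sup>T M x\<close>, which is positive when \<open>y\<close> is dominant; hence a small
  step from \<open>x\<close> towards \<open>y\<close> stays in the simplex and increases the objective.\<close>

lemma quadratic_form_along_line:
  fixes M :: "real^'n^'n"
  assumes "transpose M = M"
  shows "(x + t *\<^sub>R d) \<bullet> (M *v (x + t *\<^sub>R d))
           = x \<bullet> (M *v x) + 2 * t * (d \<bullet> (M *v x)) + t\<^sup>2 * (d \<bullet> (M *v d))"
proof -
  have "x \<bullet> (M *v d) = (x v* M) \<bullet> d"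
    by (simp add: dot_lmul_matrix)
  also have "\<dots> = d \<bullet> (M *v x)"
    by (metis assms inner_commute transpose_matrix_vector)
  finally have "x \<bullet> (M *v d) = d \<bullet> (M *v x)" .
  then show ?thesis
    by (simp add: matrix_vector_right_distrib matrix_vector_mult_scaleR inner_add_left
        inner_add_right algebra_simps power2_eq_square)
qed

lemma quadratic_form_increases_along_direction:
  fixes M :: "real^'n^'n"
  assumes "transpose M = M" and "d \<bullet> (M *v x) > 0"
  obtains t where "0 < t" "t \<le> 1" "(x + t *\<^sub>R d) \<bullet> (M *v (x + t *\<^sub>R d)) > x \<bullet> (M *v x)"
proof
  define g where "g = d \<bullet> (M *v x)"
  define c where "c = d \<bullet> (M *v d)"
  define t where "t = min 1 (g / (\<bar>c\<bar> + 1))"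
  show "0 < t" "t \<le> 1"
    using assms(2) by (simp_all add: t_def g_def)
  have "t \<le> g / (\<bar>c\<bar> + 1)"
    by (simp add: t_def)
  then have "t * (\<bar>c\<bar> + 1) \<le> g"
    by (simp add: pos_le_divide_eq add_pos_nonneg)
  then have "t * c > - g"
    using \<open>0 < t\<close> abs_ge_minus_self[of c] mult_left_mono[of "- c" "\<bar>c\<bar>" t]
    by (simp add: algebra_simps)
  then have "t * (2 * g + t * c) > 0"
    using \<open>0 < t\<close> assms(2) by (simp add: g_def)
  moreover have "2 * t * g + t\<^sup>2 * c = t * (2 * g + t * c)"
    by (simp add: power2_eq_square algebra_simps)
  ultimately have "2 * t * g + t\<^sup>2 * c > 0"
    by simp
  then show "(x + t *\<^sub>R d) \<bullet> (M *v (x + t *\<^sub>R d)) > x \<bullet> (M *v x)"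
    unfolding quadratic_form_along_line[OF assms(1)] g_def c_def by linarith
qed

lemma convex_std_simplex: "convex std_simplex"
  unfolding convex_def std_simplex_def
  by (simp add: sum.distrib flip: sum_distrib_left)

lemma axis_in_std_simplex: "axis i 1 \<in> std_simplex"
  by (simp add: std_simplex_def axis_def)

lemma transpose_IQ: "transpose (IQ Q) = IQ Q"
  by (simp add: transpose_def IQ_def vec_eq_iff)

lemma transpose_affinity_minus_IQ:
  assumes "affinity_matrix A"
  shows "transpose (A - \<alpha> *\<^sub>R IQ Q) = A - \<alpha> *\<^sub>R IQ Q"
proof -
  have "transpose A = A"
    using assms by (simp add: affinity_matrix_def)
  then show ?thesis
    using transpose_IQ[of Q] by (simp add: transpose_def vec_eq_iff)
qed

lemma dominant_distribution_not_maximizer: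
  assumes "transpose (A - \<alpha> *\<^sub>R IQ Q) = A - \<alpha> *\<^sub>R IQ Q"
    and "x \<in> std_simplex" and "dominant_distribution A \<alpha> Q y x"
  shows "\<not> is_maximizer A \<alpha> Q x"
proof -
  let ?M = "A - \<alpha> *\<^sub>R IQ Q"
  have "y \<in> std_simplex" and "(y - x) \<bullet> (?M *v x) > 0"
    using assms(3) by (simp_all add: dominant_distribution_def inner_diff_left)
  then obtain t where t: "0 < t" "t \<le> 1"
    and increase: "(x + t *\<^sub>R (y - x)) \<bullet> (?M *v (x + t *\<^sub>R (y - x))) > x \<bullet> (?M *v x)"
    using quadratic_form_increases_along_direction[OF assms(1)] by blast
  have "x + t *\<^sub>R (y - x) = (1 - t) *\<^sub>R x + t *\<^sub>R y"
    by (simp add: algebra_simps)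
  then have "x + t *\<^sub>R (y - x) \<in> std_simplex"
    using convexD[OF convex_std_simplex assms(2) \<open>y \<in> std_simplex\<close>, of "1 - t" t] t by simp
  then show ?thesis
    using increase by (auto simp: is_maximizer_def fQ_def not_le)
qed

lemma axis_inner_IQ_outside_support:
  assumes "x$i = 0"
  shows "axis i 1 \<bullet> ((A - \<alpha> *\<^sub>R IQ Q) *v x) = (A *v x)$i"
proof -
  have "(IQ Q *v x)$i = 0"
    using assms by (auto intro!: sum.neutral simp: IQ_def matrix_vector_mult_def)
  then show ?thesis
    by (simp add: inner_axis' matrix_vector_mult_diff_rdistrib flip: scaleR_matrix_vector_assoc)
qed

theorem proposition1:
  fixes A :: "real^'n^'n" and Q :: "'n set" and \<alpha> :: real and x :: "real^'n" and i :: 'n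
  assumes "affinity_matrix A"
    and "\<alpha> > 0"
    and "x \<in> std_simplex"
    and "i \<notin> support x"
    and "(A *v x)$i > x \<bullet> (A *v x) - \<alpha> * (x \<bullet> (IQ Q *v x))"
  shows "\<not> is_maximizer A \<alpha> Q x \<and> dominant_distribution A \<alpha> Q (axis i 1) x"
proof -
  have "x$i = 0"
    using assms(3,4) unfolding std_simplex_def support_def
    by (metis (mono_tags) mem_Collect_eq order_le_less)
  then have "axis i 1 \<bullet> ((A - \<alpha> *\<^sub>R IQ Q) *v x) > x \<bullet> ((A - \<alpha> *\<^sub>R IQ Q) *v x)"
    using assms(5) axis_inner_IQ_outside_support[of x i A \<alpha> Q]
    by (simp add: matrix_vector_mult_diff_rdistrib inner_diff_right flip: scaleR_matrix_vector_assoc)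
  then have dominant: "dominant_distribution A \<alpha> Q (axis i 1) x"
    by (simp add: dominant_distribution_def axis_in_std_simplex)
  have "\<not> is_maximizer A \<alpha> Q x"
    using dominant_distribution_not_maximizer[OF transpose_affinity_minus_IQ[OF assms(1)] assms(3) dominant] .
  with dominant show ?thesis by blast
qed

end
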